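(* Let $\mathbb{X}$ be a smooth Banach space and $\mathbb{Y}$ an $n$-dimensional subspace of $\mathbb{X}$. Then $\mathbb{Y}$ is coproximinal if and only if $\dim\operatorname{span}\{y^*\in S_{\mathbb{X}^*}: y^*\in J(y),\ y\in\mathbb{Y}\}=n$.
   Context: For $y\neq 0$, $J(y)=\{f\in\mathbb{X}^*:\|f\|=1,f(y)=\|y\|\}$; $\mathbb{X}$ is smooth if $J(y)$ is a singleton for every unit vector $y$. $S_{\mathbb{X}^*}$ is the unit sphere of $\mathbb{X}^*$. Given $x\in\mathbb{X}$, $y_0\in\mathbb{Y}$ is a best coapproximation to $x$ out of $\mathbb{Y}$ if $\|y_0-y\|\le\|x-y\|$ for all $y\in\mathbb{Y}$; $\mathbb{Y}$ is coproximinal if every $x\in\mathbb{X}$ has a best coapproximation out of $\mathbb{Y}$. *)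

theory Defs
  imports "HOL-Analysis.Analysis"
begin

definition duality_map :: "'a::real_normed_vector \<Rightarrow> ('a \<Rightarrow>\<^sub>L real) set" where
  "duality_map y = {f. norm f = 1 \<and> blinfun_apply f y = norm y}"

definition smooth_space :: "'a::real_normed_vector itself \<Rightarrow> bool" where
  "smooth_space _ \<longleftrightarrow> (\<forall>y::'a. norm y = 1 \<longrightarrow> (\<exists>!f. f \<in> duality_map y))"

definition is_best_coapprox :: "'a::real_normed_vector set \<Rightarrow> 'a \<Rightarrow> 'a \<Rightarrow> bool" where
  "is_best_coapprox Y x y0 \<longleftrightarrow> y0 \<in> Y \<and> (\<forall>y\<in>Y. norm (y0 - y) \<le> norm (x - y))"

definition coproximinal :: "'a::real_normed_vector set \<Rightarrow> bool" where
  "coproximinal Y \<longleftrightarrow> (\<forall>x. \<exists>y0. is_best_coapprox Y x y0)"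

definition has_dimension :: "'a::real_vector set \<Rightarrow> nat \<Rightarrow> bool" where
  "has_dimension V n \<longleftrightarrow> (\<exists>B. finite B \<and> independent B \<and> card B = n \<and> span B = V)"

end

theory Submission
  imports Defs "HOL-Library.Function_Algebras"
begin

text \<open>In a smooth space a nonzero \<open>y\<close> has a unique support functional, and Birkhoff--James
  orthogonality of \<open>y\<close> to \<open>w\<close> forces it to vanish at \<open>w\<close>. As \<open>y0 \<in> Y\<close> is a best
  coapproximation to \<open>x\<close> exactly when every point of \<open>Y\<close> is orthogonal to \<open>x - y0\<close>, this happens
  iff \<open>f x = f y0\<close> for all support functionals \<open>f\<close> at points of \<open>Y\<close>. These functionals separate
  the points of \<open>Y\<close>, so their span has dimension at least \<open>n\<close>. Coproximinality says that no
  nonzero element of the span annihilates \<open>Y\<close>, so restriction to \<open>Y\<close> is injective and the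
  dimension is at most \<open>n\<close>. Conversely, if the span has dimension \<open>n\<close>, evaluation on a basis of it
  is a linear bijection from \<open>Y\<close> onto \<open>\<real>\<^sup>n\<close>, so every \<open>x\<close> has a point of \<open>Y\<close> with
  the same values.\<close>

definition birkhoff_orthogonal :: "'a::real_normed_vector \<Rightarrow> 'a \<Rightarrow> bool" where
  "birkhoff_orthogonal y w \<longleftrightarrow> (\<forall>s::real. norm y \<le> norm (y + s *\<^sub>R w))"

lemma duality_map_scaleR:
  assumes "c > 0"
  shows "duality_map (c *\<^sub>R y) = duality_map y"
  using assms by (auto simp: duality_map_def blinfun.scaleR_right)

lemma duality_map_apply_le:
  assumes "f \<in> duality_map y"
  shows "\<bar>blinfun_apply f x\<bar> \<le> norm x"
  using assms norm_blinfun[of f x] by (simp add: duality_map_def)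

lemma smooth_space_duality_map_nonempty:
  fixes y :: "'a::real_normed_vector"
  assumes "smooth_space TYPE('a)" "y \<noteq> 0"
  obtains f where "f \<in> duality_map y"
proof -
  have "norm (y /\<^sub>R norm y) = 1" using assms(2) by simp
  then obtain f where "f \<in> duality_map (y /\<^sub>R norm y)"
    using assms(1) unfolding smooth_space_def by blast
  moreover have "y = norm y *\<^sub>R (y /\<^sub>R norm y)" using assms(2) by simp
  ultimately show ?thesis
    using that duality_map_scaleR[of "norm y" "y /\<^sub>R norm y"] assms(2) by auto
qed

lemma smooth_space_duality_map_unique:
  fixes y :: "'a::real_normed_vector"
  assumes "smooth_space TYPE('a)" "y \<noteq> 0"
    and "f \<in> duality_map y" "g \<in> duality_map y"
  shows "f = g"
proof -
  have "norm (y /\<^sub>R norm y) = 1" using assms(2) by simp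
  then have "\<exists>!f. f \<in> duality_map (y /\<^sub>R norm y)"
    using assms(1) unfolding smooth_space_def by blast
  moreover have "duality_map (y /\<^sub>R norm y) = duality_map y"
    using duality_map_scaleR[of "inverse (norm y)" y] assms(2) by simp
  ultimately show ?thesis using assms(3,4) by blast
qed

lemma closed_mem_of_cluster_point:
  assumes "closed C" "eventually (\<lambda>x. x \<in> C) F" "inf (nhds h) F \<noteq> bot"
  shows "h \<in> C"
proof (rule ccontr)
  assume "h \<notin> C"
  then have "eventually (\<lambda>x. x \<notin> C) (nhds h)"
    using assms(1) by (simp add: eventually_nhds) (metis open_Compl Compl_iff)
  then have "eventually (\<lambda>_. False) (inf (nhds h) F)"
    using assms(2) unfolding eventually_inf by fast
  then show False using assms(3) by (simp add: eventually_False)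
qed

lemma compact_norm_bounded_functions:
  "compact (PiE UNIV (\<lambda>x::'a::real_normed_vector. {- norm x .. norm x}))"
proof -
  have "compactin (product_topology (\<lambda>_. euclidean) UNIV) (PiE UNIV (\<lambda>x::'a. {- norm x .. norm x}))"
    by (simp add: compactin_PiE)
  then show ?thesis by (simp add: euclidean_product_topology)
qed

text \<open>A weak-star cluster point, from Tychonoff's theorem; together with smoothness it
  replaces the Hahn--Banach theorem below.\<close>

lemma blinfun_sequence_pointwise_cluster_point:
  fixes g :: "nat \<Rightarrow> 'a::real_normed_vector \<Rightarrow>\<^sub>L real"
  assumes "\<And>k. norm (g k) \<le> 1"
  obtains h where "norm h \<le> 1"
    and "\<And>C. closed C \<Longrightarrow> eventually (\<lambda>k. blinfun_apply (g k) \<in> C) sequentially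
           \<Longrightarrow> blinfun_apply h \<in> C"
proof -
  define F where "F = filtermap (\<lambda>k. blinfun_apply (g k)) sequentially"
  define K where "K = PiE UNIV (\<lambda>x::'a. {- norm x .. norm x})"
  have "eventually (\<lambda>f. f \<in> K) F"
    using norm_blinfun[of "g _"] assms
    by (auto simp: F_def K_def eventually_filtermap abs_le_iff intro!: always_eventually)
      (smt (verit, best) mult_left_le_one_le norm_ge_zero)+
  moreover have "F \<noteq> bot" by (simp add: F_def filtermap_bot_iff)
  ultimately obtain h0 where "h0 \<in> K" and cluster: "inf (nhds h0) F \<noteq> bot"
    using compact_norm_bounded_functions unfolding compact_filter K_def by blast
  have limit: "h0 \<in> C" if "closed C" "eventually (\<lambda>k. blinfun_apply (g k) \<in> C) sequentially" for C
    using closed_mem_of_cluster_point[OF that(1) _ cluster] that(2)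
    by (simp add: F_def eventually_filtermap)
  have bound: "\<bar>h0 x\<bar> \<le> norm x" for x
    using \<open>h0 \<in> K\<close> unfolding K_def PiE_iff abs_le_iff by (metis UNIV_I atLeastAtMost_iff minus_le_iff)
  have "bounded_linear h0"
  proof (rule bounded_linear_intro[where K=1])
    show "h0 (a + b) = h0 a + h0 b" for a b
    proof -
      have "h0 \<in> {f. f (a + b) = f a + f b}"
        by (rule limit) (auto intro!: closed_Collect_eq continuous_intros simp: blinfun.add_right)
      then show ?thesis by simp
    qed
    show "h0 (c *\<^sub>R a) = c *\<^sub>R h0 a" for c a
    proof -
      have "h0 \<in> {f. f (c *\<^sub>R a) = c * f a}"
        by (rule limit) (auto intro!: closed_Collect_eq continuous_intros simp: blinfun.scaleR_right)
      then show ?thesis by simp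
    qed
    show "norm (h0 a) \<le> norm a * 1" for a using bound[of a] by simp
  qed
  then have h0: "blinfun_apply (Blinfun h0) = h0" by (rule bounded_linear_Blinfun_apply)
  have "norm (Blinfun h0) \<le> 1"
    by (rule norm_blinfun_bound) (use bound h0 in auto)
  with that[of "Blinfun h0"] limit h0 show ?thesis by simp
qed

lemma birkhoff_orthogonal_perturbed_support_functional:
  assumes orth: "birkhoff_orthogonal y w" and "t > 0" and g: "g \<in> duality_map (y - t *\<^sub>R w)"
  shows "blinfun_apply g w \<le> 0" and "norm y - t * norm w \<le> blinfun_apply g y"
proof -
  have norm_y: "norm y \<le> norm (y - t *\<^sub>R w)"
    using orth unfolding birkhoff_orthogonal_def by (metis diff_conv_add_uminus scaleR_minus_left)
  have g_z: "g y - t * g w = norm (y - t *\<^sub>R w)"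
    using g by (simp add: duality_map_def blinfun.diff_right blinfun.scaleR_right)
  have "g y \<le> norm y" using duality_map_apply_le[OF g, of y] by simp
  then have "t * g w \<le> 0" using g_z norm_y by linarith
  then show "g w \<le> 0" using \<open>t > 0\<close> by (simp add: mult_le_0_iff)
  have "\<bar>g w\<bar> \<le> norm w" by (rule duality_map_apply_le[OF g])
  then have "t * - norm w \<le> t * g w" using \<open>t > 0\<close> by (intro mult_left_mono) auto
  then show "norm y - t * norm w \<le> g y" using g_z norm_y by simp
qed

text \<open>Support functionals at \<open>y - w / (k + 1)\<close> are nonpositive at \<open>w\<close>; a weak-star cluster
  point of them is a support functional at \<open>y\<close>.\<close>

lemma birkhoff_orthogonal_support_functional_nonpos:
  fixes y w :: "'a::real_normed_vector"
  assumes smooth: "smooth_space TYPE('a)" and "y \<noteq> 0" and orth: "birkhoff_orthogonal y w"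
  obtains h where "h \<in> duality_map y" "blinfun_apply h w \<le> 0"
proof -
  define t where "t k = inverse (real (Suc k))" for k
  have t_pos: "t k > 0" for k by (simp add: t_def)
  have "norm y \<le> norm (y - t k *\<^sub>R w)" for k
    using orth unfolding birkhoff_orthogonal_def by (metis diff_conv_add_uminus scaleR_minus_left)
  then have "y - t k *\<^sub>R w \<noteq> 0" for k using \<open>y \<noteq> 0\<close> by (metis norm_zero norm_le_zero_iff)
  then have "\<exists>f. f \<in> duality_map (y - t k *\<^sub>R w)" for k
    using smooth_space_duality_map_nonempty[OF smooth] by metis
  then obtain g where g: "\<And>k. g k \<in> duality_map (y - t k *\<^sub>R w)" by metis
  note g_bounds = birkhoff_orthogonal_perturbed_support_functional[OF orth t_pos g]
  have "norm (g k) \<le> 1" for k using g[of k] by (simp add: duality_map_def)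
  then obtain h where norm_h: "norm h \<le> 1" and limit: "\<And>C. closed C
      \<Longrightarrow> eventually (\<lambda>k. blinfun_apply (g k) \<in> C) sequentially \<Longrightarrow> blinfun_apply h \<in> C"
    using blinfun_sequence_pointwise_cluster_point by blast
  have "blinfun_apply h \<in> {f. f w \<le> 0}"
    by (rule limit) (auto intro!: closed_Collect_le continuous_intros simp: g_bounds(1))
  then have h_w: "h w \<le> 0" by simp
  have "norm y - t m * norm w \<le> h y" for m
  proof -
    have "eventually (\<lambda>k. blinfun_apply (g k) \<in> {f. norm y - t m * norm w \<le> f y}) sequentially"
      unfolding eventually_sequentially
    proof (intro exI allI impI)
      fix k assume "m \<le> k"
      then have "t k * norm w \<le> t m * norm w" by (simp add: t_def field_simps mult_right_mono)
      then show "blinfun_apply (g k) \<in> {f. norm y - t m * norm w \<le> f y}"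
        using g_bounds(2)[of k] by simp
    qed
    then have "blinfun_apply h \<in> {f. norm y - t m * norm w \<le> f y}"
      by (intro limit) (auto intro!: closed_Collect_le continuous_intros)
    then show ?thesis by simp
  qed
  moreover have "(\<lambda>m. norm y - t m * norm w) \<longlonglongrightarrow> norm y - 0 * norm w"
    unfolding t_def by (intro tendsto_intros LIMSEQ_inverse_real_of_nat)
  ultimately have "norm y \<le> h y" using LIMSEQ_le_const2 by force
  moreover have "h y \<le> norm h * norm y" using norm_blinfun[of h y] by simp
  moreover have "norm h * norm y \<le> norm y" using norm_h by (simp add: mult_left_le_one_le)
  ultimately have "h y = norm y" "1 * norm y \<le> norm h * norm y" by linarith+
  moreover from this(2) have "norm h = 1" using norm_h \<open>y \<noteq> 0\<close> by simp
  ultimately show ?thesis using that h_w by (simp add: duality_map_def)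
qed

lemma birkhoff_orthogonal_imp_support_functional_zero:
  fixes y w :: "'a::real_normed_vector"
  assumes smooth: "smooth_space TYPE('a)" and "y \<noteq> 0"
    and orth: "birkhoff_orthogonal y w" and f: "f \<in> duality_map y"
  shows "blinfun_apply f w = 0"
proof -
  obtain h1 where h1: "h1 \<in> duality_map y" "h1 w \<le> 0"
    using birkhoff_orthogonal_support_functional_nonpos[OF smooth \<open>y \<noteq> 0\<close> orth] .
  have "birkhoff_orthogonal y (- w)"
    using orth unfolding birkhoff_orthogonal_def by (metis scaleR_minus_left scaleR_minus_right)
  then obtain h2 where h2: "h2 \<in> duality_map y" "h2 (- w) \<le> 0"
    using birkhoff_orthogonal_support_functional_nonpos[OF smooth \<open>y \<noteq> 0\<close>] by blast
  have "h1 = f" "h2 = f"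
    using smooth_space_duality_map_unique[OF smooth \<open>y \<noteq> 0\<close>] f h1(1) h2(1) by blast+
  then show ?thesis using h1(2) h2(2) by (simp add: blinfun.minus_right)
qed

definition support_functionals :: "'a::real_normed_vector set \<Rightarrow> ('a \<Rightarrow>\<^sub>L real) set" where
  "support_functionals Y = {f. norm f = 1 \<and> (\<exists>y\<in>Y. y \<noteq> 0 \<and> f \<in> duality_map y)}"

lemma best_coapprox_imp_birkhoff_orthogonal:
  assumes "subspace Y" "is_best_coapprox Y x y0" "y \<in> Y"
  shows "birkhoff_orthogonal y (x - y0)"
  unfolding birkhoff_orthogonal_def
proof
  fix s :: real
  show "norm y \<le> norm (y + s *\<^sub>R (x - y0))"
  proof (cases "s = 0")
    case False
    define v where "v = y0 - (1 / s) *\<^sub>R y"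
    have "y0 \<in> Y" using assms(2) by (simp add: is_best_coapprox_def)
    then have "v \<in> Y" using assms(1,3) by (simp add: v_def subspace_diff subspace_scale)
    then have "\<bar>s\<bar> * norm (y0 - v) \<le> \<bar>s\<bar> * norm (x - v)"
      using assms(2) by (simp add: is_best_coapprox_def mult_left_mono)
    moreover have "\<bar>s\<bar> * norm (y0 - v) = norm y" using False by (simp add: v_def)
    moreover have "s *\<^sub>R (x - v) = y + s *\<^sub>R (x - y0)"
      using False by (simp add: v_def algebra_simps)
    ultimately show ?thesis by (metis norm_scaleR real_norm_def)
  qed simp
qed

lemma best_coapprox_iff_support_functionals:
  fixes Y :: "'a::real_normed_vector set"
  assumes smooth: "smooth_space TYPE('a)" and "subspace Y"
  shows "is_best_coapprox Y x y0 \<longleftrightarrow>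
    y0 \<in> Y \<and> (\<forall>f\<in>support_functionals Y. blinfun_apply f x = blinfun_apply f y0)"
proof
  assume best: "is_best_coapprox Y x y0"
  show "y0 \<in> Y \<and> (\<forall>f\<in>support_functionals Y. f x = f y0)"
  proof (intro conjI ballI)
    show "y0 \<in> Y" using best by (simp add: is_best_coapprox_def)
    fix f assume "f \<in> support_functionals Y"
    then obtain y where "y \<in> Y" "y \<noteq> 0" "f \<in> duality_map y"
      by (auto simp: support_functionals_def)
    then have "f (x - y0) = 0"
      using birkhoff_orthogonal_imp_support_functional_zero[OF smooth]
        best_coapprox_imp_birkhoff_orthogonal[OF \<open>subspace Y\<close> best] by blast
    then show "f x = f y0" by (simp add: blinfun.diff_right)
  qed
next
  assume y0: "y0 \<in> Y \<and> (\<forall>f\<in>support_functionals Y. f x = f y0)"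
  show "is_best_coapprox Y x y0"
    unfolding is_best_coapprox_def
  proof (intro conjI ballI)
    show "y0 \<in> Y" using y0 by simp
    fix y assume "y \<in> Y"
    show "norm (y0 - y) \<le> norm (x - y)"
    proof (cases "y0 = y")
      case False
      then obtain f where f: "f \<in> duality_map (y0 - y)"
        using smooth_space_duality_map_nonempty[OF smooth] by (metis eq_iff_diff_eq_0)
      moreover have "y0 - y \<in> Y" using \<open>y \<in> Y\<close> y0 \<open>subspace Y\<close> by (simp add: subspace_diff)
      ultimately have "f \<in> support_functionals Y"
        using False f unfolding support_functionals_def duality_map_def by force
      then have "norm (y0 - y) = f (x - y)"
        using f y0 by (simp add: duality_map_def blinfun.diff_right)
      then show ?thesis using duality_map_apply_le[OF f, of "x - y"] by simp
    qed simp
  qed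
qed

text \<open>\<open>\<real>\<^sup>D\<close> for a finite index set \<open>D\<close> is modelled by the real functions vanishing outside \<open>D\<close>.\<close>

instantiation "fun" :: (type, real_vector) real_vector
begin
definition scaleR_fun_def: "scaleR r f = (\<lambda>x. r *\<^sub>R f x)"
instance by standard (auto simp: scaleR_fun_def fun_eq_iff scaleR_add_right scaleR_add_left)
end

lemma sum_fun_apply: "(\<Sum>a\<in>A. (f a :: 'b \<Rightarrow> 'c::comm_monoid_add)) z = (\<Sum>a\<in>A. f a z)"
  by (induction A rule: infinite_finite_induct) (auto simp: plus_fun_apply)

lemma independent_card_le_card_support:
  fixes V :: "('b \<Rightarrow> real) set"
  assumes "finite D" "independent V" "\<And>v z. v \<in> V \<Longrightarrow> z \<notin> D \<Longrightarrow> v z = 0"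
  shows "finite V \<and> card V \<le> card D"
proof -
  have "V \<subseteq> span ((\<lambda>d. indicator {d}) ` D)"
  proof
    fix v assume "v \<in> V"
    have "v = (\<Sum>d\<in>D. v d *\<^sub>R indicator {d})"
    proof
      fix z
      have "(\<Sum>d\<in>D. v d *\<^sub>R indicator {d}) z = (\<Sum>d\<in>D. if d = z then v z else 0)"
        by (auto simp: sum_fun_apply scaleR_fun_def indicator_def intro: sum.cong)
      then show "v z = (\<Sum>d\<in>D. v d *\<^sub>R indicator {d}) z"
        using assms(1,3) \<open>v \<in> V\<close> by (simp add: sum.delta)
    qed
    also have "\<dots> \<in> span ((\<lambda>d. indicator {d}) ` D)"
      by (intro span_sum span_scale span_base) auto
    finally show "v \<in> span ((\<lambda>d. indicator {d}) ` D)" .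
  qed
  then have "finite V \<and> card V \<le> card ((\<lambda>d. indicator {d} :: 'b \<Rightarrow> real) ` D)"
    using assms(1,2) by (intro independent_span_bound) auto
  then show ?thesis using card_image_le[OF assms(1)] by (meson le_trans)
qed

lemma card_le_card_if_inj_on_span:
  fixes T :: "'v::real_vector \<Rightarrow> 'b \<Rightarrow> real"
  assumes "linear T" "finite D" "independent A" "inj_on T (span A)"
    and "\<And>a z. a \<in> A \<Longrightarrow> z \<notin> D \<Longrightarrow> T a z = 0"
  shows "card A \<le> card D"
proof -
  have "independent (T ` A)"
    by (rule linear_independent_injective_image[OF assms(1,3,4)])
  then have "card (T ` A) \<le> card D"
    using independent_card_le_card_support[OF assms(2)] assms(5) by blast
  moreover have "inj_on T A" using assms(4) span_superset inj_on_subset by blast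
  ultimately show ?thesis by (simp add: card_image)
qed

lemma span_blinfun_apply_eq:
  assumes "f \<in> span B" "\<And>g. g \<in> B \<Longrightarrow> blinfun_apply g x = blinfun_apply g y"
  shows "blinfun_apply f x = blinfun_apply f y"
  by (rule real_vector.linear_eq_on_span[OF bounded_linear.linear bounded_linear.linear])
    (use assms in auto)

lemma evaluation_linear_inj_on_span:
  fixes B :: "('a::real_normed_vector \<Rightarrow>\<^sub>L real) set"
  assumes sep: "\<And>u. u \<in> span BY \<Longrightarrow> u \<noteq> 0 \<Longrightarrow> \<exists>f\<in>span B. blinfun_apply f u \<noteq> 0"
  defines "E \<equiv> \<lambda>u f. if f \<in> B then blinfun_apply f u else 0"
  shows "linear E" and "inj_on E (span BY)"
proof -
  show "linear E"
    by (auto simp: linear_iff E_def fun_eq_iff scaleR_fun_def blinfun.add_right blinfun.scaleR_right)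
  show "inj_on E (span BY)"
  proof (rule inj_onI, rule ccontr)
    fix u v assume "u \<in> span BY" "v \<in> span BY" "E u = E v" "u \<noteq> v"
    then obtain f where "f \<in> span B" "f (u - v) \<noteq> 0"
      using sep[of "u - v"] by (auto simp: span_diff)
    moreover have "g u = g v" if "g \<in> B" for g
      using fun_cong[OF \<open>E u = E v\<close>, of g] that by (simp add: E_def)
    ultimately show False
      using span_blinfun_apply_eq[of f B u v] by (simp add: blinfun.diff_right)
  qed
qed

lemma card_le_card_if_separates:
  fixes B :: "('a::real_normed_vector \<Rightarrow>\<^sub>L real) set"
  assumes "finite B" "independent BY"
    and "\<And>u. u \<in> span BY \<Longrightarrow> u \<noteq> 0 \<Longrightarrow> \<exists>f\<in>span B. blinfun_apply f u \<noteq> 0"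
  shows "card BY \<le> card B"
  using card_le_card_if_inj_on_span[OF evaluation_linear_inj_on_span(1)[OF assms(3)] assms(1,2)
      evaluation_linear_inj_on_span(2)[OF assms(3)]] by simp

lemma exists_same_values_if_separates:
  fixes B :: "('a::real_normed_vector \<Rightarrow>\<^sub>L real) set"
  assumes "finite B" "finite BY" "independent BY" "card B \<le> card BY"
    and sep: "\<And>u. u \<in> span BY \<Longrightarrow> u \<noteq> 0 \<Longrightarrow> \<exists>f\<in>span B. blinfun_apply f u \<noteq> 0"
  shows "\<exists>y0\<in>span BY. \<forall>f\<in>B. blinfun_apply f x = blinfun_apply f y0"
proof -
  define E where "E u = (\<lambda>f. if f \<in> B then blinfun_apply f u else 0)" for u
  have lin: "linear E" and inj: "inj_on E (span BY)"
    using evaluation_linear_inj_on_span[OF sep] unfolding E_def by blast+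
  have ind: "independent (E ` BY)"
    by (rule linear_independent_injective_image[OF lin assms(3) inj])
  have card: "card (E ` BY) = card BY"
    by (rule card_image[OF inj_on_subset[OF inj span_superset]])
  have "E x \<in> span (E ` BY)"
  proof (rule ccontr)
    assume "E x \<notin> span (E ` BY)"
    then have "independent (insert (E x) (E ` BY))" "E x \<notin> E ` BY"
      using independent_insertI[OF _ ind] span_superset by blast+
    moreover have "v z = 0" if "v \<in> insert (E x) (E ` BY)" "z \<notin> B" for v z
      using that by (auto simp: E_def)
    ultimately have "card (insert (E x) (E ` BY)) \<le> card B"
      using independent_card_le_card_support[OF assms(1)] by blast
    moreover have "card (insert (E x) (E ` BY)) = card BY + 1"
      using card \<open>E x \<notin> E ` BY\<close> assms(2) by simp
    ultimately show False using assms(4) by simp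
  qed
  then obtain y0 where "y0 \<in> span BY" "E x = E y0"
    using span_linear_image[OF lin, of BY] by auto
  then show ?thesis by (auto simp: E_def fun_eq_iff split: if_splits)
qed

lemma card_le_card_if_no_annihilator:
  fixes C :: "('a::real_normed_vector \<Rightarrow>\<^sub>L real) set"
  assumes "finite BY" "independent C"
    and annihilator: "\<And>g. g \<in> span C \<Longrightarrow> \<forall>b\<in>BY. blinfun_apply g b = 0 \<Longrightarrow> g = 0"
  shows "card C \<le> card BY"
proof -
  define R where "R g = (\<lambda>b. if b \<in> BY then blinfun_apply g b else 0)" for g :: "'a \<Rightarrow>\<^sub>L real"
  have lin: "linear R"
    by (auto simp: linear_iff R_def fun_eq_iff scaleR_fun_def plus_blinfun.rep_eq scaleR_blinfun.rep_eq)
  have "inj_on R (span C)"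
    unfolding linear_inj_on_iff_eq_0[OF lin subspace_span]
    using annihilator by (auto simp: R_def fun_eq_iff)
  from card_le_card_if_inj_on_span[OF lin assms(1,2) this] show ?thesis by (simp add: R_def)
qed

lemma has_dimension_span_if_card_bounds:
  fixes L :: "'v::real_vector set"
  assumes upper: "\<And>C. C \<subseteq> L \<Longrightarrow> finite C \<Longrightarrow> independent C \<Longrightarrow> card C \<le> n"
    and lower: "\<And>B. finite B \<Longrightarrow> L \<subseteq> span B \<Longrightarrow> n \<le> card B"
  shows "has_dimension (span L) n"
proof -
  obtain B where B: "B \<subseteq> L" "independent B" "L \<subseteq> span B"
    using maximal_independent_subset by blast
  have "finite B"
  proof (rule ccontr)
    assume "infinite B"
    then obtain C where "finite C" "card C = n + 1" "C \<subseteq> B"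
      using infinite_arbitrarily_large by blast
    then show False using upper[of C] B independent_mono by fastforce
  qed
  moreover have "span B = span L"
    using B span_mono span_minimal[OF B(3) subspace_span] by blast
  ultimately show ?thesis
    unfolding has_dimension_def using upper[OF B(1) _ B(2)] lower[OF _ B(3)] B(2)
    by (intro exI[of _ B]) (auto intro: antisym)
qed

lemma support_functional_at:
  fixes Y :: "'a::real_normed_vector set"
  assumes "smooth_space TYPE('a)" "y \<in> Y" "y \<noteq> 0"
  obtains f where "f \<in> support_functionals Y" "blinfun_apply f y = norm y"
proof -
  obtain f where f: "f \<in> duality_map y"
    using smooth_space_duality_map_nonempty[OF assms(1,3)] .
  then have "norm f = 1" "f y = norm y" by (auto simp: duality_map_def)
  with f assms(2,3) show thesis by (intro that) (auto simp: support_functionals_def)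
qed

lemma coproximinal_imp_no_annihilator:
  fixes Y :: "'a::real_normed_vector set"
  assumes smooth: "smooth_space TYPE('a)" and "subspace Y" "coproximinal Y"
    and "g \<in> span (support_functionals Y)" "\<forall>y\<in>Y. blinfun_apply g y = 0"
  shows "g = 0"
proof (rule blinfun_eqI)
  fix x
  obtain y0 where "is_best_coapprox Y x y0"
    using \<open>coproximinal Y\<close> by (auto simp: coproximinal_def)
  then have "y0 \<in> Y" "\<forall>f\<in>support_functionals Y. f x = f y0"
    using best_coapprox_iff_support_functionals[OF smooth \<open>subspace Y\<close>] by blast+
  then have "g x = g y0" by (intro span_blinfun_apply_eq[OF assms(4)]) blast
  then show "g x = blinfun_apply 0 x" using assms(5) \<open>y0 \<in> Y\<close> by simp
qed

lemma support_functionals_separate: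
  fixes Y :: "'a::real_normed_vector set"
  assumes "smooth_space TYPE('a)" "support_functionals Y \<subseteq> span B" "u \<in> Y" "u \<noteq> 0"
  shows "\<exists>f\<in>span B. blinfun_apply f u \<noteq> 0"
proof -
  obtain f where "f \<in> support_functionals Y" "f u = norm u"
    by (rule support_functional_at[OF assms(1,3,4)])
  then show ?thesis using assms(2,4) by (intro bexI[of _ f]) auto
qed

lemma has_dimension_span_support_functionals_if_coproximinal:
  fixes Y :: "'a::real_normed_vector set"
  assumes smooth: "smooth_space TYPE('a)" and "subspace Y" "coproximinal Y"
    and BY: "finite BY" "independent BY" "span BY = Y"
  shows "has_dimension (span (support_functionals Y)) (card BY)"
proof (rule has_dimension_span_if_card_bounds)
  fix C assume C: "C \<subseteq> support_functionals Y" "finite C" "independent C"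
  have "g = 0" if "g \<in> span C" "\<forall>b\<in>BY. g b = 0" for g
  proof (rule coproximinal_imp_no_annihilator[OF smooth \<open>subspace Y\<close> \<open>coproximinal Y\<close>])
    show "g \<in> span (support_functionals Y)" using that(1) span_mono[OF C(1)] by blast
    show "\<forall>y\<in>Y. g y = 0"
      unfolding BY(3)[symmetric] using that(2)
      by (auto intro: real_vector.linear_eq_0_on_span[OF bounded_linear.linear[OF blinfun.bounded_linear_right]])
  qed
  then show "card C \<le> card BY" by (rule card_le_card_if_no_annihilator[OF BY(1) C(3)])
next
  fix B assume "finite B" "support_functionals Y \<subseteq> span B"
  then show "card BY \<le> card B"
    using support_functionals_separate[OF smooth] BY(3) by (intro card_le_card_if_separates[OF _ BY(2)]) auto
qed

lemma coproximinal_if_has_dimension_span_support_functionals: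
  fixes Y :: "'a::real_normed_vector set"
  assumes smooth: "smooth_space TYPE('a)" and "subspace Y"
    and BY: "finite BY" "independent BY" "span BY = Y"
    and "has_dimension (span (support_functionals Y)) (card BY)"
  shows "coproximinal Y"
  unfolding coproximinal_def
proof
  fix x
  obtain BD where BD: "finite BD" "card BD = card BY" "span BD = span (support_functionals Y)"
    using assms(6) unfolding has_dimension_def by blast
  then have S_BD: "support_functionals Y \<subseteq> span BD" using span_superset by blast
  have "\<exists>y0\<in>span BY. \<forall>f\<in>BD. f x = f y0"
    using BD(2) support_functionals_separate[OF smooth S_BD] BY(3)
    by (intro exists_same_values_if_separates[OF BD(1) BY(1,2)]) auto
  then obtain y0 where "y0 \<in> Y" "\<forall>f\<in>BD. f x = f y0" using BY(3) by blast
  then have "\<forall>f\<in>support_functionals Y. f x = f y0"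
    using S_BD by (blast intro: span_blinfun_apply_eq)
  then have "is_best_coapprox Y x y0"
    using best_coapprox_iff_support_functionals[OF smooth \<open>subspace Y\<close>] \<open>y0 \<in> Y\<close> by simp
  then show "\<exists>y0. is_best_coapprox Y x y0" ..
qed

theorem mainTheorem9:
  fixes Y :: "'a::banach set" and n :: nat
  assumes "smooth_space TYPE('a)"
    and "subspace Y"
    and "has_dimension Y n"
  shows "coproximinal Y \<longleftrightarrow>
    has_dimension (span {f. norm f = 1 \<and> (\<exists>y\<in>Y. y \<noteq> 0 \<and> f \<in> duality_map y)}) n"
proof -
  obtain BY where BY: "finite BY" "independent BY" "card BY = n" "span BY = Y"
    using assms(3) unfolding has_dimension_def by blast
  show ?thesis
    unfolding support_functionals_def[symmetric] BY(3)[symmetric]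
    using has_dimension_span_support_functionals_if_coproximinal[OF assms(1,2) _ BY(1,2,4)]
      coproximinal_if_has_dimension_span_support_functionals[OF assms(1,2) BY(1,2,4)]
    by blast
qed

end
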